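(* Let $H=\operatorname{diag}(\lambda_1,\dots,\lambda_n)$ with $\lambda_1\ge\dots\ge\lambda_{n-p}\ge0>\lambda_{n-p+1}\ge\dots\ge\lambda_n$ for some $1\le p<n$, let $L=\max(\lambda_1,-\lambda_n)$ and $0<\alpha<1/L$. Let $(\gamma_k)_{k\ge1}$, $(\beta_k)_{k\ge1}$ be nondecreasing sequences in $[0,1]$ with $\gamma_k=\beta_k$ for all $k$ and $\lim_{k\to\infty}\gamma_k=\lim_{k\to\infty}\beta_k=1$. For $i$ with $\lambda_i<0$ define $b_{i,0}=0$ and, for $k\ge1$, \[ b_{i,k}=(\beta_k+\gamma_k\alpha|\lambda_i|)\Big(1-\frac{1}{1+b_{i,k-1}}\Big)+\alpha|\lambda_i|. \] Then for all $i$ with $\lambda_i<0$, \[ \lim_{k\to\infty}b_{i,k}=\alpha|\lambda_i|+\sqrt{\alpha|\lambda_i|}\sqrt{1+\alpha|\lambda_i|}. \]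
   Context: The quantities $b_{i,k}$ describe the per-iteration growth factors $x_i^{k+1}=x_i^0\prod_{m=0}^k(1+b_{i,m})$ of the components along negative-curvature directions for the accelerated gradient iteration $y^k=x^k+\gamma_k(x^k-x^{k-1})$, $x^{k+1}=x^k+\beta_k(x^k-x^{k-1})-\alpha Hy^k$, $x^0=x^1$, applied to $f(x)=\frac12x^THx$. *)

theory Defs
  imports Complex_Main
begin

fun growth_b :: "real \<Rightarrow> real \<Rightarrow> (nat \<Rightarrow> real) \<Rightarrow> (nat \<Rightarrow> real) \<Rightarrow> nat \<Rightarrow> real" where
  "growth_b a lam beta gamma 0 = 0"
| "growth_b a lam beta gamma (Suc k) =
     (beta (Suc k) + gamma (Suc k) * a * \<bar>lam\<bar>) * (1 - 1 / (1 + growth_b a lam beta gamma k))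
     + a * \<bar>lam\<bar>"

end

theory Submission
  imports Defs
begin

text \<open>With \<open>\<gamma>\<^sub>k = \<beta>\<^sub>k\<close> and \<open>c = \<alpha>|\<lambda>\<^sub>i|\<close> the recursion reads
  \<open>b\<^sub>k = g(\<beta>\<^sub>k, b\<^sub>k\<^sub>-\<^sub>1)\<close> with \<open>g(t, x) = t(1 + c)(1 - 1/(1 + x)) + c\<close>, a map that is
  nondecreasing in both arguments on the nonnegative quadrant. Starting from \<open>b\<^sub>0 = 0\<close>,
  the iterates therefore increase and stay below the positive fixed point \<open>s\<close> of \<open>g(1, \<cdot>)\<close>;
  their limit is a nonnegative fixed point of \<open>g(1, \<cdot>)\<close>, i.e. a root of
  \<open>(l - c)\<^sup>2 = c(1 + c)\<close>, and so equals \<open>s = c + \<surd>c \<surd>(1 + c)\<close>.\<close>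

definition growth_map :: "real \<Rightarrow> real \<Rightarrow> real \<Rightarrow> real" where
  "growth_map c t x = t * (1 + c) * (1 - 1 / (1 + x)) + c"

lemma growth_map_mono:
  assumes "0 \<le> c" "0 \<le> t" "t \<le> t'" "0 \<le> x" "x \<le> x'"
  shows "growth_map c t x \<le> growth_map c t' x'"
proof -
  have frac: "0 \<le> 1 - 1 / (1 + x)" "1 - 1 / (1 + x) \<le> 1 - 1 / (1 + x')"
    using assms by (auto simp: field_simps)
  have "t * (1 - 1 / (1 + x)) \<le> t' * (1 - 1 / (1 + x'))"
    using assms frac by (intro mult_mono) auto
  then show ?thesis
    using assms by (simp add: growth_map_def mult_left_mono mult.assoc mult.left_commute)
qed

lemma growth_map_fixed_point_iff:
  assumes c: "0 \<le> c" and l: "0 \<le> l"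
  shows "growth_map c 1 l = l \<longleftrightarrow> l = c + sqrt c * sqrt (1 + c)"
proof -
  have "growth_map c 1 l = l \<longleftrightarrow> (l - c)\<^sup>2 = c * (1 + c)"
    using l by (simp add: growth_map_def field_simps power2_eq_square) argo
  also have "\<dots> \<longleftrightarrow> l - c = sqrt (c * (1 + c))"
  proof
    assume sq: "(l - c)\<^sup>2 = c * (1 + c)"
    show "l - c = sqrt (c * (1 + c))"
    proof (cases "l \<ge> c")
      case True
      then show ?thesis using sq by (metis diff_ge_0_iff_ge real_sqrt_unique)
    next
      case False
      \<comment> \<open>below \<open>c\<close>, \<open>0 \<le> l\<close> forces \<open>(c - l)\<^sup>2 \<le> c\<^sup>2\<close>, which is less than \<open>c(1 + c)\<close> unless \<open>c = 0\<close>\<close>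
      have "(c - l)\<^sup>2 \<le> c\<^sup>2" using False l by (intro power_mono) auto
      then show ?thesis using sq False c l by (simp add: power2_eq_square algebra_simps)
    qed
  qed (use c in simp)
  finally show ?thesis using c by (auto simp: real_sqrt_mult)
qed

lemma growth_iteration_tendsto:
  fixes c :: real and t b :: "nat \<Rightarrow> real"
  assumes c: "0 \<le> c"
    and t_mono: "\<And>k. 1 \<le> k \<Longrightarrow> t k \<le> t (Suc k)"
    and t_range: "\<And>k. 1 \<le> k \<Longrightarrow> 0 \<le> t k \<and> t k \<le> 1"
    and t_lim: "t \<longlonglongrightarrow> 1"
    and b_0: "b 0 = 0"
    and b_Suc: "\<And>k. b (Suc k) = growth_map c (t (Suc k)) (b k)"
  shows "b \<longlonglongrightarrow> c + sqrt c * sqrt (1 + c)"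
proof -
  define s where "s = c + sqrt c * sqrt (1 + c)"
  have s_nonneg: "0 \<le> s" using c by (simp add: s_def)
  have s_fixed: "growth_map c 1 s = s"
    using growth_map_fixed_point_iff[OF c s_nonneg] by (simp add: s_def)
  have b_nonneg: "0 \<le> b k" for k
  proof (induction k)
    case (Suc j)
    have "growth_map c 0 0 \<le> growth_map c (t (Suc j)) (b j)"
      using Suc c t_range[of "Suc j"] by (intro growth_map_mono) auto
    then show ?case using c by (simp add: b_Suc growth_map_def)
  qed (simp add: b_0)
  have "b k \<le> b (Suc k)" for k
  proof (induction k)
    case (Suc j)
    then show ?case
      unfolding b_Suc[of "Suc j"] b_Suc[of j]
      using c b_nonneg t_mono[of "Suc j"] t_range[of "Suc j"] by (intro growth_map_mono) auto
  qed (simp add: b_0 b_nonneg)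
  then have b_inc: "incseq b" by (rule incseq_SucI)
  have b_bounded: "b k \<le> s" for k
  proof (induction k)
    case (Suc j)
    have "growth_map c (t (Suc j)) (b j) \<le> growth_map c 1 s"
      using Suc c b_nonneg t_range[of "Suc j"] by (intro growth_map_mono) auto
    then show ?case using b_Suc s_fixed by simp
  qed (simp add: b_0 s_nonneg)
  obtain l where b_lim: "b \<longlonglongrightarrow> l" and b_le: "\<And>k. b k \<le> l"
    using incseq_convergent[OF b_inc, of s] b_bounded by blast
  have l_nonneg: "0 \<le> l" using b_le[of 0] b_0 by simp
  have "(\<lambda>k. growth_map c (t (Suc k)) (b k)) \<longlonglongrightarrow> growth_map c 1 l"
    unfolding growth_map_def using l_nonneg
    by (intro tendsto_intros LIMSEQ_Suc[OF t_lim] b_lim) auto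
  moreover have "(\<lambda>k. growth_map c (t (Suc k)) (b k)) \<longlonglongrightarrow> l"
    using LIMSEQ_Suc[OF b_lim] by (simp add: b_Suc)
  ultimately have "growth_map c 1 l = l" by (rule LIMSEQ_unique)
  then show ?thesis
    using b_lim growth_map_fixed_point_iff[OF c l_nonneg] by simp
qed

lemma growth_b_Suc_eq_growth_map:
  assumes "gamma (Suc k) = beta (Suc k)"
  shows "growth_b a lam beta gamma (Suc k)
    = growth_map (a * \<bar>lam\<bar>) (beta (Suc k)) (growth_b a lam beta gamma k)"
  using assms by (simp add: growth_map_def algebra_simps)

theorem corollary4p3:
  fixes n p :: nat and lam :: "nat \<Rightarrow> real" and L \<alpha> :: real
    and \<beta> \<gamma> :: "nat \<Rightarrow> real"
  assumes hp: "1 \<le> p" "p < n"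
    and hsorted: "\<And>i j. 1 \<le> i \<Longrightarrow> i \<le> j \<Longrightarrow> j \<le> n \<Longrightarrow> lam j \<le> lam i"
    and hnonneg: "lam (n - p) \<ge> 0"
    and hneg: "lam (n - p + 1) < 0"
    and hL: "L = max (lam 1) (- lam n)"
    and h\<alpha>: "0 < \<alpha>" "\<alpha> < 1 / L"
    and h\<gamma>mono: "\<And>k. 1 \<le> k \<Longrightarrow> \<gamma> k \<le> \<gamma> (Suc k)"
    and h\<beta>mono: "\<And>k. 1 \<le> k \<Longrightarrow> \<beta> k \<le> \<beta> (Suc k)"
    and h\<gamma>range: "\<And>k. 1 \<le> k \<Longrightarrow> 0 \<le> \<gamma> k \<and> \<gamma> k \<le> 1"
    and h\<beta>range: "\<And>k. 1 \<le> k \<Longrightarrow> 0 \<le> \<beta> k \<and> \<beta> k \<le> 1"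
    and heq: "\<And>k. 1 \<le> k \<Longrightarrow> \<gamma> k = \<beta> k"
    and h\<gamma>lim: "\<gamma> \<longlonglongrightarrow> 1"
    and h\<beta>lim: "\<beta> \<longlonglongrightarrow> 1"
  shows "\<forall>i. 1 \<le> i \<and> i \<le> n \<and> lam i < 0 \<longrightarrow>
           (\<lambda>k. growth_b \<alpha> (lam i) \<beta> \<gamma> k) \<longlonglongrightarrow>
             \<alpha> * \<bar>lam i\<bar> + sqrt (\<alpha> * \<bar>lam i\<bar>) * sqrt (1 + \<alpha> * \<bar>lam i\<bar>)"
proof (intro allI impI)
  fix i
  have "0 \<le> \<alpha> * \<bar>lam i\<bar>" using h\<alpha> by simp
  then show "(\<lambda>k. growth_b \<alpha> (lam i) \<beta> \<gamma> k) \<longlonglongrightarrow>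
      \<alpha> * \<bar>lam i\<bar> + sqrt (\<alpha> * \<bar>lam i\<bar>) * sqrt (1 + \<alpha> * \<bar>lam i\<bar>)"
    using h\<beta>mono h\<beta>range h\<beta>lim
    by (rule growth_iteration_tendsto) (simp_all add: growth_b_Suc_eq_growth_map heq del: growth_b.simps(2))
qed

end
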